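(* Let $\alpha\ge2$, $h,\ell,t\ge1$, $\varepsilon\ge0$ be integers with $h-\varepsilon\ge2\ell$, and let $\mathcal T$ be a finite family of subspaces of $\mathbb F_q^{(h-\varepsilon)t}$ with $|\mathcal T|\ge\alpha$ such that each member has dimension at most $\ell t$ and any $\alpha$ members span $\mathbb F_q^{(h-\varepsilon)t}$. Then $\alpha\ell\ge h-\varepsilon$ and $$|\mathcal T|\le\Big(\Big\lfloor\tfrac{h-\varepsilon}{\ell}\Big\rfloor-2\Big)+\Big(\alpha-\Big\lfloor\tfrac{h-\varepsilon}{\ell}\Big\rfloor+1\Big)\frac{q^{\ell t+1}-1}{q-1}.$$
   Context: "Any $\alpha$ members" means any $\alpha$ members with distinct indices in the family. *)

theory Defs
  imports "HOL-Analysis.Cartesian_Space"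
begin

end

theory Submission
  imports Defs
begin

text \<open>
  Any a members span the whole space of dimension (h - e) t, so (h - e) t \<le> a l t.
  For the bound, let p = (h - e) div l - 2, fix p members and enclose their union, of dimension
  at most p l t, in a subspace U of codimension l t + 1; its annihilator A has at most
  q^(l t + 1) elements. Every other member T j spans together with U a proper subspace, so
  some nonzero w j in A annihilates T j. Conversely a nonzero w in A annihilates at most
  a - p - 1 of the other members, for otherwise a members would lie in the hyperplane
  orthogonal to w. Counting the pairs (j, c) with c a nonzero scalar through c w j in A - {0}
  gives (card I - p) (q - 1) \<le> (a - p - 1) (q^(l t + 1) - 1).
\<close>

context finite_dimensional_vector_space
begin

lemma dim_Un_le: "dim (A \<union> B) \<le> dim A + dim B"
proof -
  obtain BA where BA: "independent BA" "A \<subseteq> span BA" "card BA = dim A"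
    using basis_exists by metis
  obtain BB where BB: "independent BB" "B \<subseteq> span BB" "card BB = dim B"
    using basis_exists by metis
  have "A \<union> B \<subseteq> span (BA \<union> BB)"
    using BA(2) BB(2) span_mono[of BA "BA \<union> BB"] span_mono[of BB "BA \<union> BB"] by blast
  then have "dim (A \<union> B) \<le> card (BA \<union> BB)"
    using BA(1) BB(1) by (intro dim_le_card) (auto intro: finiteI_independent)
  also have "\<dots> \<le> dim A + dim B"
    using card_Un_le[of BA BB] BA(3) BB(3) by simp
  finally show ?thesis .
qed

lemma dim_UN_le_sum:
  assumes "finite J"
  shows "dim (\<Union>i\<in>J. T i) \<le> (\<Sum>i\<in>J. dim (T i))"
  using assms
proof (induction J rule: finite_induct)
  case (insert i J)
  have "dim (\<Union>j\<in>insert i J. T j) \<le> dim (T i) + dim (\<Union>j\<in>J. T j)"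
    using dim_Un_le by simp
  with insert show ?case by simp
qed simp

lemma dim_UN_le:
  assumes "finite J" "\<And>i. i \<in> J \<Longrightarrow> dim (T i) \<le> k"
  shows "dim (\<Union>i\<in>J. T i) \<le> card J * k"
  using dim_UN_le_sum[OF assms(1), of T] sum_bounded_above[of J "\<lambda>i. dim (T i)" k] assms(2)
  by simp

lemma exists_subspace_dim:
  assumes "dim S \<le> d" "d \<le> dim (UNIV :: 'b set)"
  obtains U where "subspace U" "S \<subseteq> U" "dim U = d"
proof -
  obtain B where B: "B \<subseteq> S" "independent B" "S \<subseteq> span B" "card B = dim S"
    using basis_exists by metis
  obtain E where E: "B \<subseteq> E" "independent E" "UNIV \<subseteq> span E"
    using maximal_independent_subset_extend[OF subset_UNIV B(2)] by metis
  have "card E = dim (UNIV :: 'b set)"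
    using basis_card_eq_dim[of E UNIV] E by simp
  moreover have "finite E" using E(2) finiteI_independent by blast
  ultimately have "d - card B \<le> card (E - B)"
    using assms E(1) B(4) by (simp add: card_Diff_subset finite_subset)
  then obtain X where X: "X \<subseteq> E - B" "card X = d - card B"
    by (meson obtain_subset_with_card_n)
  have indep: "independent (B \<union> X)"
    using E(1,2) X(1) independent_mono[of E "B \<union> X"] by blast
  have "card (B \<union> X) = d"
    using X assms(1) B(4) card_Un_disjoint[of B X] indep finiteI_independent by fastforce
  moreover have "S \<subseteq> span (B \<union> X)"
    using B(3) span_mono[of B "B \<union> X"] by blast
  ultimately show ?thesis
    using that[of "span (B \<union> X)"] indep by (simp add: dim_eq_card_independent)
qed

end

lemma scalar_product_add_right: "scalar_product w (x + y) = scalar_product w x + scalar_product w y"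
  by (simp add: scalar_product_def sum.distrib distrib_left)

lemma scalar_product_add_left: "scalar_product (v + w) x = scalar_product v x + scalar_product w x"
  by (simp add: scalar_product_def sum.distrib distrib_right)

lemma scalar_product_scale_right:
  "scalar_product w (c *s x) = c * scalar_product (w :: 'a::comm_ring_1 ^ 'n) x"
  by (simp add: scalar_product_def sum_distrib_left algebra_simps)

lemma scalar_product_scale_left: "scalar_product (c *s w) x = c * scalar_product w x"
  by (simp add: scalar_product_def sum_distrib_left algebra_simps)

lemma scalar_product_diff_left:
  "scalar_product (v - w) x = scalar_product v x - scalar_product (w :: 'a::ring_1 ^ 'n) x"
  by (simp add: scalar_product_def sum_subtractf algebra_simps)

lemma scalar_product_axis_right: "scalar_product w (axis i 1) = w $ i"
  by (simp add: scalar_product_def axis_def if_distrib sum.delta cong: if_cong)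

lemma card_finite_field_ge_2: "CARD('a::{field,finite}) \<ge> 2"
  using card_mono[of UNIV "{0::'a, 1}"] by simp

text \<open>Linear functionals on the vector space are represented by vectors through the scalar product.\<close>

definition annihilator :: "('a::field ^ 'n) set \<Rightarrow> ('a ^ 'n) set" where
  "annihilator S = {w. \<forall>x\<in>S. scalar_product w x = 0}"

lemma annihilator_antimono: "S \<subseteq> S' \<Longrightarrow> annihilator S' \<subseteq> annihilator S"
  by (auto simp: annihilator_def)

lemma subspace_annihilator: "vec.subspace (annihilator S)"
  by (auto simp: vec.subspace_def annihilator_def scalar_product_add_left scalar_product_scale_left)
     (simp add: scalar_product_def)

lemma annihilator_Un: "annihilator (S \<union> S') = annihilator S \<inter> annihilator S'"
  by (auto simp: annihilator_def)

lemma annihilator_span [simp]: "annihilator (vec.span S) = annihilator S"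
proof
  show "annihilator S \<subseteq> annihilator (vec.span S)"
  proof
    fix w assume w: "w \<in> annihilator S"
    have "vec.subspace {x. scalar_product w x = 0}"
      by (auto simp: vec.subspace_def scalar_product_add_right scalar_product_scale_right)
         (simp add: scalar_product_def)
    then have "vec.span S \<subseteq> {x. scalar_product w x = 0}"
      using w by (intro vec.span_minimal) (auto simp: annihilator_def)
    then show "w \<in> annihilator (vec.span S)" by (auto simp: annihilator_def)
  qed
qed (simp add: annihilator_antimono vec.span_superset)

lemma annihilator_UNIV [simp]: "annihilator (UNIV :: ('a::field ^ 'n) set) = {0}"
proof -
  have "w = 0" if "w \<in> annihilator UNIV" for w :: "'a ^ 'n"
    using that by (simp add: annihilator_def vec_eq_iff) (metis scalar_product_axis_right)
  then show ?thesis by (auto simp: annihilator_def scalar_product_def)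
qed

lemma annihilator_basis:
  assumes "B \<subseteq> S" "S \<subseteq> vec.span B"
  shows "annihilator S = annihilator B"
  using annihilator_antimono[OF assms(1)] annihilator_antimono[OF assms(2)] by simp

lemma annihilator_nontrivial:
  fixes S :: "('a::{field,finite} ^ 'n) set"
  assumes "vec.dim S < CARD('n)"
  obtains w where "w \<in> annihilator S" "w \<noteq> 0"
proof -
  obtain B where B: "B \<subseteq> S" "vec.independent B" "S \<subseteq> vec.span B" "card B = vec.dim S"
    using vec.basis_exists by metis
  have "finite B" using B(2) vec.finiteI_independent by blast
  define g where "g w = restrict (scalar_product w) B" for w :: "'a ^ 'n"
  have "card (PiE B (\<lambda>_. UNIV :: 'a set)) = CARD('a) ^ card B"
    using \<open>finite B\<close> by (simp add: card_PiE)
  also have "\<dots> < CARD('a) ^ CARD('n)"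
    using B(4) assms card_finite_field_ge_2[where 'a='a] by (intro power_strict_increasing) auto
  also have "\<dots> = card (UNIV :: ('a ^ 'n) set)" by simp
  finally have "card (PiE B (\<lambda>_. UNIV :: 'a set)) < card (UNIV :: ('a ^ 'n) set)" .
  moreover have "range g \<subseteq> PiE B (\<lambda>_. UNIV)"
    unfolding g_def by (intro image_subsetI restrict_PiE) auto
  ultimately have "\<not> inj g"
    using card_inj_on_le[of g UNIV "PiE B (\<lambda>_. UNIV)"] \<open>finite B\<close> by auto
  then obtain w1 w2 where "w1 \<noteq> w2" "g w1 = g w2" unfolding inj_def by blast
  then have "w1 - w2 \<in> annihilator B"
    by (auto simp: annihilator_def g_def scalar_product_diff_left restrict_def fun_eq_iff split: if_splits)
  then show ?thesis
    using that[of "w1 - w2"] \<open>w1 \<noteq> w2\<close> annihilator_basis[OF B(1,3)] by simp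
qed

lemma card_annihilator_le:
  fixes S :: "('a::{field,finite} ^ 'n) set"
  shows "card (annihilator S) \<le> CARD('a) ^ (CARD('n) - vec.dim S)"
proof -
  obtain B where B: "B \<subseteq> S" "vec.independent B" "S \<subseteq> vec.span B" "card B = vec.dim S"
    using vec.basis_exists by metis
  obtain E where E: "B \<subseteq> E" "vec.independent E" "UNIV \<subseteq> vec.span E"
    using vec.maximal_independent_subset_extend[OF subset_UNIV B(2)] by metis
  have "finite E" using E(2) vec.finiteI_independent by blast
  have "card E = CARD('n)"
    using vec.basis_card_eq_dim[of E UNIV] E vec_dim_card by simp
  define g where "g w = restrict (scalar_product w) (E - B)" for w :: "'a ^ 'n"
  have "inj_on g (annihilator B)"
  proof (rule inj_onI)
    fix w1 w2 assume w: "w1 \<in> annihilator B" "w2 \<in> annihilator B" "g w1 = g w2"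
    then have "w1 - w2 \<in> annihilator E"
      by (auto simp: annihilator_def g_def scalar_product_diff_left fun_eq_iff restrict_def
          split: if_splits)
    then show "w1 = w2"
      using annihilator_antimono[OF E(3)] by auto
  qed
  moreover have "g ` annihilator B \<subseteq> PiE (E - B) (\<lambda>_. UNIV)"
    unfolding g_def by (intro image_subsetI restrict_PiE) auto
  ultimately have "card (annihilator B) \<le> card (PiE (E - B) (\<lambda>_. UNIV :: 'a set))"
    using \<open>finite E\<close> by (intro card_inj_on_le) auto
  also have "\<dots> = CARD('a) ^ (CARD('n) - vec.dim S)"
    using \<open>finite E\<close> E(1) B(4) \<open>card E = CARD('n)\<close> by (simp add: card_PiE card_Diff_subset finite_subset)
  finally show ?thesis using annihilator_basis[OF B(1,3)] by simp
qed

lemma card_annihilated_members_less: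
  fixes T :: "'i \<Rightarrow> ('a::field ^ 'n) set"
  assumes "finite I" "P \<subseteq> I" "card P < a"
    and spans: "\<And>J. J \<subseteq> I \<Longrightarrow> card J = a \<Longrightarrow> vec.span (\<Union>i\<in>J. T i) = UNIV"
    and "w \<noteq> 0" and "\<And>i. i \<in> P \<Longrightarrow> w \<in> annihilator (T i)"
  shows "card {j \<in> I - P. w \<in> annihilator (T j)} < a - card P"
proof (rule ccontr)
  assume "\<not> ?thesis"
  then obtain Q where Q: "Q \<subseteq> {j \<in> I - P. w \<in> annihilator (T j)}" "card Q = a - card P"
    using obtain_subset_with_card_n[of "a - card P"] by (metis not_less)
  have "finite P" using finite_subset[OF assms(2,1)] .
  moreover have "finite Q" using Q(1) finite_subset[OF _ assms(1), of Q] by auto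
  moreover have "P \<inter> Q = {}" using Q(1) by auto
  ultimately have "card (P \<union> Q) = a"
    using Q(2) assms(3) by (simp add: card_Un_disjoint)
  moreover have "P \<union> Q \<subseteq> I" using Q(1) assms(2) by auto
  ultimately have "annihilator (\<Union>i\<in>P \<union> Q. T i) = {0}"
    using spans[of "P \<union> Q"] annihilator_span[of "\<Union>i\<in>P \<union> Q. T i"] by simp
  moreover have "w \<in> annihilator (\<Union>i\<in>P \<union> Q. T i)"
    using Q(1) assms(6) by (auto simp: annihilator_def)
  ultimately show False using \<open>w \<noteq> 0\<close> by simp
qed

lemma card_times_units_le:
  fixes T :: "'j \<Rightarrow> ('a::{field,finite} ^ 'n) set"
  assumes "finite R" "vec.subspace A"
    and W: "\<And>j. j \<in> R \<Longrightarrow> W j \<in> A \<inter> annihilator (T j) - {0}"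
    and few: "\<And>w. w \<in> A - {0} \<Longrightarrow> card {j \<in> R. w \<in> annihilator (T j)} \<le> b"
  shows "card R * (CARD('a) - 1) \<le> card (A - {0}) * b"
proof -
  txt \<open>Each \<open>w\<close> is hit by at most one scalar per member \<open>j\<close> annihilated by \<open>w\<close>.\<close>
  define \<phi> where "\<phi> p = snd p *s W (fst p)" for p :: "'j \<times> 'a"
  let ?units = "UNIV - {0 :: 'a}"
  let ?fibre = "\<lambda>w. {p \<in> R \<times> ?units. \<phi> p = w}"
  have scaled_in: "c *s W j \<in> A - {0}" if "j \<in> R" "c \<noteq> 0" for j c
    using that W vec.subspace_scale[OF assms(2)] by simp
  have maps_to: "\<phi> ` (R \<times> ?units) \<subseteq> A - {0}"
  proof (rule image_subsetI)
    fix p assume "p \<in> R \<times> ?units"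
    then show "\<phi> p \<in> A - {0}"
      using scaled_in[of "fst p" "snd p"] by (simp add: \<phi>_def mem_Times_iff)
  qed
  have fibre_le: "card (?fibre w) \<le> b" if "w \<in> A - {0}" for w
  proof -
    have "inj_on fst (?fibre w)"
    proof (rule inj_onI)
      fix p p' assume "p \<in> ?fibre w" "p' \<in> ?fibre w" "fst p = fst p'"
      then have "snd p *s W (fst p) = snd p' *s W (fst p)" "W (fst p) \<noteq> 0"
        using W by (auto simp: \<phi>_def)
      then show "p = p'" using \<open>fst p = fst p'\<close> by (simp add: prod_eq_iff)
    qed
    moreover have "fst ` ?fibre w \<subseteq> {j \<in> R. w \<in> annihilator (T j)}"
      using W by (auto simp: \<phi>_def annihilator_def scalar_product_scale_left)
    ultimately have "card (?fibre w) \<le> card {j \<in> R. w \<in> annihilator (T j)}"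
      using \<open>finite R\<close> card_inj_on_le[of fst "?fibre w"] by simp
    also have "\<dots> \<le> b" using few that by blast
    finally show ?thesis .
  qed
  have "card R * (CARD('a) - 1) = card (R \<times> ?units)"
    by (simp add: card_cartesian_product card_Diff_subset)
  also have "\<dots> = card (\<Union>w\<in>A - {0}. ?fibre w)"
    using maps_to by (intro arg_cong[where f = card]) auto
  also have "\<dots> \<le> (\<Sum>w\<in>A - {0}. card (?fibre w))"
    by (intro card_UN_le) simp
  also have "\<dots> \<le> card (A - {0}) * b"
    using sum_bounded_above[of "A - {0}" "\<lambda>w. card (?fibre w)" b] fibre_le by simp
  finally show ?thesis .
qed

lemma CARD_le_card_mult_if_spanning:
  fixes T :: "'i \<Rightarrow> ('a::field ^ 'n) set"
  assumes "finite J" "vec.span (\<Union>i\<in>J. T i) = UNIV" "\<And>i. i \<in> J \<Longrightarrow> vec.dim (T i) \<le> k"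
  shows "CARD('n) \<le> card J * k"
proof -
  have "CARD('n) = vec.dim (vec.span (\<Union>i\<in>J. T i))"
    using assms(2) vec_dim_card[where 'a='a and 'n='n] by simp
  also have "\<dots> \<le> card J * k"
    using vec.dim_UN_le[OF assms(1,3)] by simp
  finally show ?thesis .
qed

lemma card_spanning_family_le:
  fixes T :: "'i \<Rightarrow> ('a::{field,finite} ^ 'n) set"
  assumes "finite I" and dim_le: "\<And>i. i \<in> I \<Longrightarrow> vec.dim (T i) \<le> k"
    and spans: "\<And>J. J \<subseteq> I \<Longrightarrow> card J = a \<Longrightarrow> vec.span (\<Union>i\<in>J. T i) = UNIV"
    and "a \<le> card I" "p < a" and room: "(p + 1) * k < CARD('n)"
  shows "real (card I)
    \<le> real p + (real a - real p - 1) * ((real CARD('a) ^ (k + 1) - 1) / (real CARD('a) - 1))"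
proof -
  let ?q = "CARD('a)"
  have "p \<le> card I" using assms(4,5) by simp
  then obtain P where P: "P \<subseteq> I" "card P = p"
    by (metis obtain_subset_with_card_n)
  have "vec.dim (\<Union>i\<in>P. T i) \<le> CARD('n) - (k + 1)"
    using vec.dim_UN_le[of P T k] finite_subset[OF P(1) assms(1)] dim_le P room by force
  then obtain U where U: "(\<Union>i\<in>P. T i) \<subseteq> U" "vec.dim U = CARD('n) - (k + 1)"
    using vec.exists_subspace_dim vec_dim_card diff_le_self by metis
  define A where "A = annihilator U"
  have "card A \<le> ?q ^ (k + 1)"
    using card_annihilator_le[of U] U(2) room unfolding A_def by simp
  moreover have "0 \<in> A"
    using vec.subspace_0[OF subspace_annihilator] by (simp add: A_def)
  ultimately have card_A0: "card (A - {0}) \<le> ?q ^ (k + 1) - 1"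
    by (metis card_Diff1_le card_Diff_singleton diff_le_mono finite)
  have "\<exists>w. w \<in> A \<inter> annihilator (T j) - {0}" if "j \<in> I - P" for j
  proof -
    have "vec.dim (U \<union> T j) < CARD('n)"
      using vec.dim_Un_le[of U "T j"] dim_le[of j] that U(2) room by simp
    then obtain w where "w \<in> annihilator (U \<union> T j)" "w \<noteq> 0"
      by (rule annihilator_nontrivial)
    then show ?thesis by (auto simp: A_def annihilator_Un)
  qed
  then obtain W where W: "\<And>j. j \<in> I - P \<Longrightarrow> W j \<in> A \<inter> annihilator (T j) - {0}"
    by metis
  have few: "card {j \<in> I - P. w \<in> annihilator (T j)} \<le> a - p - 1" if "w \<in> A - {0}" for w
  proof -
    have "w \<in> annihilator (T i)" if "i \<in> P" for i
      using \<open>w \<in> A - {0}\<close> annihilator_antimono[of "T i" U] U(1) that by (auto simp: A_def)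
    then show ?thesis
      using card_annihilated_members_less[OF assms(1) P(1) _ spans] P(2) assms(5) that by fastforce
  qed
  have "card (I - P) * (?q - 1) \<le> card (A - {0}) * (a - p - 1)"
    using card_times_units_le[OF _ subspace_annihilator[of U, folded A_def] W few] assms(1) by simp
  also have "\<dots> \<le> (?q ^ (k + 1) - 1) * (a - p - 1)"
    using card_A0 by simp
  finally have "real (card (I - P) * (?q - 1)) \<le> real ((?q ^ (k + 1) - 1) * (a - p - 1))"
    by (rule of_nat_mono)
  moreover have "?q \<ge> 2" using card_finite_field_ge_2 .
  then have "real (?q - 1) = real ?q - 1" "real (?q ^ (k + 1) - 1) = real ?q ^ (k + 1) - 1"
    by (simp_all add: of_nat_diff)
  moreover have "real (a - p - 1) = real a - real p - 1"
    using assms(5) by simp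
  ultimately have "real (card (I - P)) * (real ?q - 1) \<le> (real ?q ^ (k + 1) - 1) * (real a - real p - 1)"
    by (simp only: of_nat_mult)
  then have "real (card (I - P)) \<le> (real a - real p - 1) * ((real ?q ^ (k + 1) - 1) / (real ?q - 1))"
    using \<open>?q \<ge> 2\<close> by (simp add: field_simps)
  moreover have "card I = p + card (I - P)"
    using P assms(1) card_mono[OF assms(1) P(1)] by (simp add: card_Diff_subset finite_subset)
  ultimately show ?thesis by simp
qed

theorem mainTheorem11:
  fixes a h l t e :: nat
    and I :: "'i set"
    and T :: "'i \<Rightarrow> ('a::{field,finite} ^ 'n) set"
  assumes "a \<ge> 2" and "h \<ge> 1" and "l \<ge> 1" and "t \<ge> 1"
    and "h \<ge> e + 2 * l"
    and "CARD('n) = (h - e) * t"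
    and "finite I" and "card I \<ge> a"
    and "\<And>i. i \<in> I \<Longrightarrow> vec.subspace (T i)"
    and "\<And>i. i \<in> I \<Longrightarrow> vec.dim (T i) \<le> l * t"
    and "\<And>J. J \<subseteq> I \<Longrightarrow> card J = a \<Longrightarrow> vec.span (\<Union>i\<in>J. T i) = UNIV"
  shows "a * l \<ge> h - e
    \<and> real (card I) \<le> (real ((h - e) div l) - 2)
        + (real a - real ((h - e) div l) + 1)
          * ((real CARD('a) ^ (l * t + 1) - 1) / (real CARD('a) - 1))"
proof -
  let ?m = "(h - e) div l"
  obtain J where J: "J \<subseteq> I" "card J = a"
    using obtain_subset_with_card_n[OF assms(8)] by metis
  have "(h - e) * t \<le> (a * l) * t"
    using CARD_le_card_mult_if_spanning[of J T "l * t"] finite_subset[OF J(1) assms(7)]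
      assms(6,10,11) J by (simp add: mult.assoc subset_iff)
  then have dim_bound: "h - e \<le> a * l"
    using assms(4) by simp
  have "2 \<le> ?m"
    using assms(3,5) div_le_mono[of "2 * l" "h - e" l] by simp
  have "?m * l \<le> a * l"
    using dim_bound div_times_less_eq_dividend le_trans by blast
  then have "?m - 2 < a" using assms(1,3) by simp
  have "(?m - 2 + 1) * l < ?m * l"
    using \<open>2 \<le> ?m\<close> assms(3) by (intro mult_less_mono1) auto
  also have "\<dots> \<le> h - e"
    by (rule div_times_less_eq_dividend)
  finally have "(?m - 2 + 1) * (l * t) < CARD('n)"
    using assms(4,6) by (simp add: mult.assoc[symmetric])
  note bound = card_spanning_family_le[OF assms(7,10,11,8) \<open>?m - 2 < a\<close> this]
  have "real (?m - 2) = real ?m - 2" "real a - (real ?m - 2) - 1 = real a - real ?m + 1"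
    using \<open>2 \<le> ?m\<close> by simp_all
  with bound dim_bound show ?thesis
    by (simp only:)
qed

end
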